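(* For any word $w=z_{k_1}\cdots z_{k_n}$ of length $n\geq 1$ and weight $k=k_1+\cdots+k_n$, \[\frac{d}{dt}S^t(C(w))=\begin{cases}0&(n=1),\\ S^t(C(\delta(w)))&(n\geq 2),\end{cases}\qquad \frac{d}{dt}S^t(\Sigma(w))=\begin{cases}(k-1)z_{k+1}&(n=1),\\ S^t(\Sigma(\delta(w)))-S^t(C(w))&(n\geq 2).\end{cases}\]
   Context: Multiple zeta setting: $\mathfrak{h}^1$ is the non-commutative polynomial algebra over $\mathbb{Q}$ in letters $z_k$ ($k\geq1$), with $z_k\circ z_l=z_{k+l}$ on the span of letters, acting on words by $a\circ 1=0$, $a\circ(bw)=(a\circ b)w$. For an indeterminate $t$, the $\mathbb{Q}[t]$-linear operator $S^t$ on $\mathfrak{h}^1[t]$ is defined by $S^t(1)=1$, $S^t(aw)=aS^t(w)+t\,a\circ S^t(w)$. For a word $w=z_{k_1}\cdots z_{k_n}$ with $n\geq1$, define $C(w)=\sum_{l=1}^n z_{k_l+1}z_{k_{l+1}}\cdots z_{k_n}z_{k_1}\cdots z_{k_{l-1}}$, $\Sigma(w)=\sum_{l=1}^n\sum_{j=1}^{k_l-1}z_{k_l+1-j}z_{k_{l+1}}\cdots z_{k_n}z_{k_1}\cdots z_{k_{l-1}}z_j$, and, if $n\geq 2$ (with $k_{n+1}:=k_1$), $\delta(w)=\sum_{l=1}^n z_{k_l+k_{l+1}}z_{k_{l+2}}\cdots z_{k_n}z_{k_1}\cdots z_{k_{l-1}}$ (for $l=n$ this is $z_{k_n+k_1}z_{k_2}\cdots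 z_{k_{n-1}}$). These are extended $\mathbb{Q}[t]$-linearly. *)

theory Defs
  imports "HOL-Library.Poly_Mapping" "HOL-Computational_Algebra.Polynomial"
begin

text \<open>Words z_{k_1}...z_{k_n} are lists [k_1,...,k_n] of positive naturals.
Elements of h^1[t] are finitely supported Q[t]-linear combinations of words.\<close>

type_synonym word = "nat list"
type_synonym elt = "word \<Rightarrow>\<^sub>0 rat poly"

definition mono :: "word \<Rightarrow> elt" where
  "mono w = Poly_Mapping.single w 1"

definition scal :: "rat poly \<Rightarrow> elt \<Rightarrow> elt" where
  "scal c x = Poly_Mapping.map (\<lambda>q. c * q) x"

definition lin :: "(word \<Rightarrow> elt) \<Rightarrow> elt \<Rightarrow> elt" where
  "lin f x = (\<Sum>u\<in>Poly_Mapping.keys x. scal (Poly_Mapping.lookup x u) (f u))"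

definition lmul :: "nat \<Rightarrow> elt \<Rightarrow> elt" where
  "lmul a = lin (\<lambda>u. mono (a # u))"

definition circ :: "nat \<Rightarrow> elt \<Rightarrow> elt" where
  "circ a = lin (\<lambda>u. case u of [] \<Rightarrow> 0 | l # u' \<Rightarrow> mono ((a + l) # u'))"

fun St_word :: "word \<Rightarrow> elt" where
  "St_word [] = mono []"
| "St_word (a # w) = lmul a (St_word w) + scal [:0, 1:] (circ a (St_word w))"

definition St :: "elt \<Rightarrow> elt" where
  "St = lin St_word"

definition ddt :: "elt \<Rightarrow> elt" where
  "ddt x = Poly_Mapping.map pderiv x"

definition C_word :: "word \<Rightarrow> elt" where
  "C_word w = (\<Sum>i<length w. let r = rotate i w in mono ((hd r + 1) # tl r))"

definition Sigma_word :: "word \<Rightarrow> elt" where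
  "Sigma_word w = (\<Sum>i<length w. let r = rotate i w in
      (\<Sum>j\<in>{1..<hd r}. mono ((hd r + 1 - j) # tl r @ [j])))"

definition delta_word :: "word \<Rightarrow> elt" where
  "delta_word w = (\<Sum>i<length w. let r = rotate i w in
      mono ((r ! 0 + r ! 1) # drop 2 r))"

definition Cop :: "elt \<Rightarrow> elt" where "Cop = lin C_word"
definition Sigmaop :: "elt \<Rightarrow> elt" where "Sigmaop = lin Sigma_word"
definition deltaop :: "elt \<Rightarrow> elt" where "deltaop = lin delta_word"

end

theory Submission
  imports Defs
begin

(* Write D for the derivation of the word algebra that sums all contractions of
   two adjacent letters: D(z_{k_1}...z_{k_n}) = sum_q z_{k_1}...z_{k_q + k_{q+1}}...z_{k_n}.
   The recursion S^t(aw) = a S^t(w) + t a o S^t(w) gives, by induction on the word,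
       d/dt S^t(w) = S^t(D w),
   so the theorem reduces to two purely combinatorial identities between finite sums of words:
       D(C w) = C(delta w)            and       D(Sigma w) + C w = Sigma(delta w)   (n >= 2),
   while for n = 1 one computes directly D(Sigma z_k) = (k - 1) z_{k+1} and D(C z_k) = 0.
   Both identities are proved by splitting D of a summand into the contraction at the front,
   the interior contractions and (for Sigma) the contraction at the back.  The interior
   contractions of all rotations are matched with the non-initial rotations of the contracted
   words by a reindexing over the cyclic group of rotations; the remaining front/back terms
   pair off directly. *)

section \<open>Q[t]-linear calculus on finitely supported combinations of words\<close>

lemma lookup_scal [simp]: "Poly_Mapping.lookup (scal c x) u = c * Poly_Mapping.lookup x u"
  by (simp add: scal_def map.rep_eq when_def)

lemma scal_zero [simp]: "scal c 0 = 0" "scal 0 x = 0"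
  by (rule poly_mapping_eqI, simp)+

lemma scal_one [simp]: "scal 1 x = x"
  by (rule poly_mapping_eqI) simp

lemma scal_add_left: "scal (c + d) x = scal c x + scal d x"
  by (rule poly_mapping_eqI) (simp add: lookup_add algebra_simps)

lemma scal_add_right: "scal c (x + y) = scal c x + scal c y"
  by (rule poly_mapping_eqI) (simp add: lookup_add algebra_simps)

lemma scal_scal: "scal c (scal d x) = scal (c * d) x"
  by (rule poly_mapping_eqI) (simp add: algebra_simps)

lemma scal_sum: "scal c (sum f A) = (\<Sum>a\<in>A. scal c (f a))"
  by (rule poly_mapping_eqI) (simp add: lookup_sum sum_distrib_left)

lemma lin_over_superset:
  assumes "finite A" "Poly_Mapping.keys x \<subseteq> A"
  shows "lin f x = (\<Sum>u\<in>A. scal (Poly_Mapping.lookup x u) (f u))"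
  unfolding lin_def
  by (rule sum.mono_neutral_left) (use assms in \<open>auto simp: in_keys_iff\<close>)

lemma lin_add: "lin f (x + y) = lin f x + lin f y"
proof -
  let ?A = "Poly_Mapping.keys x \<union> Poly_Mapping.keys y"
  have "lin f (x + y) = (\<Sum>u\<in>?A. scal (Poly_Mapping.lookup (x + y) u) (f u))"
    by (rule lin_over_superset) (auto dest: keys_add[THEN subsetD])
  also have "\<dots> = (\<Sum>u\<in>?A. scal (Poly_Mapping.lookup x u) (f u))
                  + (\<Sum>u\<in>?A. scal (Poly_Mapping.lookup y u) (f u))"
    by (simp add: lookup_add scal_add_left sum.distrib)
  also have "\<dots> = lin f x + lin f y"
    by (subst (1 2) lin_over_superset[of ?A]) auto
  finally show ?thesis .
qed

lemma lin_zero [simp]: "lin f 0 = 0"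
  by (simp add: lin_def)

lemma lin_sum: "lin f (sum g A) = (\<Sum>a\<in>A. lin f (g a))"
  by (induction A rule: infinite_finite_induct) (auto simp: lin_add)

lemma lin_scal: "lin f (scal c x) = scal c (lin f x)"
proof -
  have "lin f (scal c x) = (\<Sum>u\<in>Poly_Mapping.keys x. scal (c * Poly_Mapping.lookup x u) (f u))"
    by (subst lin_over_superset[of "Poly_Mapping.keys x"]) (auto simp: in_keys_iff)
  then show ?thesis by (simp add: lin_def scal_sum scal_scal)
qed

lemma lin_mono [simp]: "lin f (mono u) = f u"
  by (simp add: lin_def mono_def)

lemma lin_lin: "lin f (lin g x) = lin (\<lambda>u. lin f (g u)) x"
  by (simp add: lin_def[of g] lin_def[of "\<lambda>u. lin f (g u)"] lin_sum lin_scal)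

lemma lin_add_fun: "lin f x + lin g x = lin (\<lambda>u. f u + g u) x"
  by (simp add: lin_def scal_add_right sum.distrib)

lemma scal_lin: "scal c (lin f x) = lin (\<lambda>u. scal c (f u)) x"
  by (simp add: lin_def scal_sum scal_scal mult.commute)

lemma lin_cong: "(\<And>u. u \<in> Poly_Mapping.keys x \<Longrightarrow> f u = g u) \<Longrightarrow> lin f x = lin g x"
  by (simp add: lin_def)

lemma lookup_ddt [simp]: "Poly_Mapping.lookup (ddt x) u = pderiv (Poly_Mapping.lookup x u)"
  by (simp add: ddt_def map.rep_eq when_def)

lemma ddt_zero [simp]: "ddt 0 = 0"
  by (rule poly_mapping_eqI) simp

lemma ddt_add: "ddt (x + y) = ddt x + ddt y"
  by (rule poly_mapping_eqI) (simp add: lookup_add pderiv_add)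

lemma ddt_sum: "ddt (sum f A) = (\<Sum>a\<in>A. ddt (f a))"
  by (induction A rule: infinite_finite_induct)
     (auto simp: ddt_add intro: poly_mapping_eqI)

lemma ddt_mono [simp]: "ddt (mono u) = 0"
  by (rule poly_mapping_eqI) (simp add: mono_def lookup_single when_def)

lemma ddt_scal: "ddt (scal c x) = scal (pderiv c) x + scal c (ddt x)"
  by (rule poly_mapping_eqI) (simp add: lookup_add pderiv_mult algebra_simps)

lemma ddt_lin:
  assumes "\<And>u. ddt (f u) = 0"
  shows "ddt (lin f x) = lin f (ddt x)"
proof -
  have "ddt (lin f x) = (\<Sum>u\<in>Poly_Mapping.keys x. scal (pderiv (Poly_Mapping.lookup x u)) (f u))"
    by (simp add: lin_def ddt_sum ddt_scal assms)
  also have "\<dots> = lin f (ddt x)"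
    by (subst lin_over_superset[of "Poly_Mapping.keys x"]) (auto simp: in_keys_iff)
  finally show ?thesis .
qed

lemma lmul_mono [simp]: "lmul a (mono u) = mono (a # u)"
  by (simp add: lmul_def)

lemma circ_mono_Nil [simp]: "circ a (mono []) = 0"
  by (simp add: circ_def)

lemma circ_mono_Cons [simp]: "circ a (mono (b # u)) = mono ((a + b) # u)"
  by (simp add: circ_def)

lemma St_mono [simp]: "St (mono u) = St_word u"
  by (simp add: St_def)

lemma circ_add: "circ a (x + y) = circ a x + circ a y"
  by (simp add: circ_def lin_add)

lemma circ_scal: "circ a (scal c x) = scal c (circ a x)"
  by (simp add: circ_def lin_scal)

lemma St_zero [simp]: "St 0 = 0"
  by (simp add: St_def)

lemma St_add: "St (x + y) = St x + St y"
  by (simp add: St_def lin_add)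

lemma St_sum: "St (sum f A) = (\<Sum>a\<in>A. St (f a))"
  by (simp add: St_def lin_sum)

lemma lmul_zero [simp]: "lmul a 0 = 0"
  by (simp add: lmul_def)

lemma lmul_sum: "lmul a (sum f A) = (\<Sum>x\<in>A. lmul a (f x))"
  by (simp add: lmul_def lin_sum)

lemma ddt_lmul: "ddt (lmul a x) = lmul a (ddt x)"
  unfolding lmul_def by (rule ddt_lin) simp

lemma ddt_circ: "ddt (circ a x) = circ a (ddt x)"
  unfolding circ_def by (rule ddt_lin) (simp split: list.split)

lemma St_lmul: "St (lmul a x) = lmul a (St x) + scal [:0, 1:] (circ a (St x))"
proof -
  have "St (lmul a x) = lin (\<lambda>u. St_word (a # u)) x"
    by (simp add: St_def lmul_def lin_lin)
  moreover have "lmul a (St x) = lin (\<lambda>u. lmul a (St_word u)) x"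
    by (simp add: St_def lmul_def[of a] lin_lin)
  moreover have "circ a (St x) = lin (\<lambda>u. circ a (St_word u)) x"
    by (simp add: St_def circ_def[of a] lin_lin)
  ultimately show ?thesis by (simp add: scal_lin lin_add_fun)
qed

lemma circ_lmul: "circ a (lmul b x) = lmul (a + b) x"
  by (simp add: lmul_def circ_def[of a] lin_lin)

lemma circ_circ: "circ a (circ b x) = circ (a + b) x"
  unfolding circ_def[of b] circ_def[of a] circ_def[of "a + b"] lin_lin
  by (rule lin_cong) (simp add: circ_def add.assoc split: list.split)

section \<open>The derivative of S^t\<close>

definition merge_at :: "nat \<Rightarrow> word \<Rightarrow> word" where
  "merge_at q v = take q v @ (v ! q + v ! (q + 1)) # drop (q + 2) v"

definition merges :: "word \<Rightarrow> elt" where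
  "merges v = (\<Sum>q<length v - 1. mono (merge_at q v))"

lemma merge_at_Suc_Cons [simp]: "merge_at (Suc q) (a # v) = a # merge_at q v"
  by (simp add: merge_at_def)

lemma merge_at_0_Cons_Cons [simp]: "merge_at 0 (a # b # v) = (a + b) # v"
  by (simp add: merge_at_def)

lemma merge_at_append: "merge_at (length xs) (xs @ a # b # ys) = xs @ (a + b) # ys"
  by (simp add: merge_at_def nth_append)

lemma merge_at_snoc: "Suc q < length u \<Longrightarrow> merge_at q (u @ [j]) = merge_at q u @ [j]"
  by (simp add: merge_at_def nth_append)

lemma merges_Cons_Cons:
  "merges (a # b # v) = mono ((a + b) # v) + lmul a (merges (b # v))"
  by (simp add: merges_def lmul_sum sum.lessThan_Suc_shift del: sum.lessThan_Suc)

text \<open>Differentiating the recursion of S^t, the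
  derivative of the factor t produces the term z_a o S^t(w), which is S^t of the
  contraction of the first two letters.\<close>
theorem ddt_St_word: "ddt (St_word v) = St (merges v)"
proof (induction v)
  case Nil
  then show ?case by (simp add: merges_def)
next
  case (Cons a w)
  have pd: "pderiv [:0, 1::rat:] = 1" by (simp add: pderiv_pCons)
  have "ddt (St_word (a # w))
        = lmul a (St (merges w)) + scal [:0, 1:] (circ a (St (merges w))) + circ a (St_word w)"
    by (simp add: ddt_add ddt_lmul ddt_scal ddt_circ pd Cons.IH algebra_simps)
  also have "\<dots> = St (lmul a (merges w)) + circ a (St_word w)"
    by (simp add: St_lmul)
  also have "\<dots> = St (merges (a # w))"
  proof (cases w)
    case Nil
    then show ?thesis by (simp add: merges_def circ_def)
  next
    case (Cons b w')
    have "St (mono ((a + b) # w')) = circ a (St_word w)"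
      by (simp add: Cons circ_add circ_scal circ_lmul circ_circ)
    then show ?thesis by (simp add: Cons merges_Cons_Cons St_add St_def lin_add)
  qed
  finally show ?case .
qed

section \<open>Sums over rotations\<close>

lemma sum_rotate_shift:
  fixes H :: "'a list \<Rightarrow> 'b::cancel_comm_monoid_add"
  shows "(\<Sum>p<length w. H (rotate (c + p) w)) = (\<Sum>p<length w. H (rotate p w))"
proof (induction c arbitrary: H)
  case 0
  then show ?case by simp
next
  case (Suc c)
  define K where "K p = H (rotate (c + p) w)" for p
  have periodic: "K (length w) = K 0"
    unfolding K_def by (metis add.right_neutral mod_add_self2 rotate_conv_mod)
  have "(\<Sum>p<length w. H (rotate (Suc c + p) w)) = (\<Sum>p<length w. K (Suc p))"
    by (simp add: K_def)
  also have "\<dots> = (\<Sum>p<length w. K p)"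
    using sum.lessThan_Suc_shift[of K "length w"] sum.lessThan_Suc[of K "length w"] periodic
    by (simp add: add.commute)
  also have "\<dots> = (\<Sum>p<length w. H (rotate p w))"
    unfolding K_def by (rule Suc.IH)
  finally show ?case .
qed

text \<open>Reindexing that matches the non-initial rotations of the contracted rotations
  (left) with the interior contractions of all rotations (right).\<close>
lemma sum_rotations_reindex:
  fixes G :: "'a list \<Rightarrow> nat \<Rightarrow> 'b::cancel_comm_monoid_add"
  assumes n: "n = length w"
  shows "(\<Sum>p<n. \<Sum>l<n-2. G (rotate (l+2) (rotate p w)) (n-2-l)) =
         (\<Sum>i<n. \<Sum>q<n-2. G (rotate i w) (Suc q))"
proof -
  have "(\<Sum>p<n. \<Sum>l<n-2. G (rotate (l+2) (rotate p w)) (n-2-l)) =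
        (\<Sum>l<n-2. \<Sum>p<n. G (rotate (l+2) (rotate p w)) (n-2-l))"
    by (rule sum.swap)
  also have "\<dots> = (\<Sum>q<n-2. \<Sum>p<n. G (rotate ((n-2 - Suc q)+2) (rotate p w)) (n-2-(n-2 - Suc q)))"
    by (rule sum.nat_diff_reindex[symmetric])
  also have "\<dots> = (\<Sum>q<n-2. \<Sum>p<n. G (rotate ((n-2 - Suc q)+2 + p) w) (Suc q))"
    by (rule sum.cong) (auto simp: rotate_rotate Suc_diff_Suc)
  also have "\<dots> = (\<Sum>q<n-2. \<Sum>p<n. G (rotate p w) (Suc q))"
    unfolding n by (intro sum.cong refl sum_rotate_shift)
  also have "\<dots> = (\<Sum>i<n. \<Sum>q<n-2. G (rotate i w) (Suc q))"
    by (rule sum.swap)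
  finally show ?thesis .
qed

lemma rotate_merge_at_0:
  assumes "length v = n" "l < n - 2"
  shows "rotate (Suc l) (merge_at 0 v) = merge_at (n-2-l) (rotate (l+2) v)"
proof -
  obtain a b u where v: "v = a # b # u"
    using assms by (cases v; cases "tl v") auto
  have lu: "l < length u" using assms v by simp
  have "rotate (Suc l) (merge_at 0 v) = drop l u @ (a + b) # take l u"
    using lu by (simp del: rotate_Suc add: v rotate_drop_take)
  moreover have "rotate (l+2) v = drop l u @ a # b # take l u"
    using lu by (simp del: rotate_Suc add: v rotate_drop_take)
  moreover have "n - 2 - l = length (drop l u)" using assms v by simp
  ultimately show ?thesis by (metis merge_at_append)
qed

lemma sum_lessThan_Suc_first: "(\<Sum>l<Suc m. f l) = f 0 + (\<Sum>l<m. f (Suc l))"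
  by (simp del: sum.lessThan_Suc add: sum.lessThan_Suc_shift)

lemma merges_split_first:
  "length v = Suc (Suc m) \<Longrightarrow> merges v = mono (merge_at 0 v) + (\<Sum>q<m. mono (merge_at (Suc q) v))"
  unfolding merges_def by (simp add: sum.lessThan_Suc_shift del: sum.lessThan_Suc)

section \<open>The identity D(C w) = C(delta w)\<close>

definition bump_head :: "word \<Rightarrow> word" where
  "bump_head r = (hd r + 1) # tl r"

lemma C_word_eq: "C_word w = (\<Sum>i<length w. mono (bump_head (rotate i w)))"
  by (simp add: C_word_def Let_def bump_head_def)

lemma delta_word_eq: "delta_word w = (\<Sum>i<length w. mono (merge_at 0 (rotate i w)))"
  by (simp add: delta_word_def Let_def merge_at_def numeral_2_eq_2)

lemma bump_head_merge_at_0: "2 \<le> length r \<Longrightarrow> bump_head (merge_at 0 r) = merge_at 0 (bump_head r)"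
  by (cases r; cases "tl r") (auto simp: bump_head_def)

lemma bump_head_merge_at_Suc: "v \<noteq> [] \<Longrightarrow> bump_head (merge_at (Suc q) v) = merge_at (Suc q) (bump_head v)"
  by (cases v) (auto simp: bump_head_def)

lemma C_word_merge_at_0:
  assumes lr: "length r = n" and n: "2 \<le> n"
  shows "C_word (merge_at 0 r) = mono (merge_at 0 (bump_head r)) +
     (\<Sum>l<n-2. mono (merge_at (n-2-l) (bump_head (rotate (l+2) r))))"
proof -
  have lm: "length (merge_at 0 r) = Suc (n-2)"
    using lr n by (simp add: merge_at_def)
  have "C_word (merge_at 0 r) = mono (bump_head (merge_at 0 r)) +
          (\<Sum>l<n-2. mono (bump_head (rotate (Suc l) (merge_at 0 r))))"
    unfolding C_word_eq lm sum_lessThan_Suc_first by simp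
  also have "mono (bump_head (merge_at 0 r)) = mono (merge_at 0 (bump_head r))"
    using lr n by (simp add: bump_head_merge_at_0)
  also have "(\<Sum>l<n-2. mono (bump_head (rotate (Suc l) (merge_at 0 r))))
           = (\<Sum>l<n-2. mono (merge_at (n-2-l) (bump_head (rotate (l+2) r))))"
  proof (rule sum.cong[OF refl])
    fix l assume l: "l \<in> {..<n-2}"
    then have "n - 2 - l = Suc (n-3-l)" by simp
    moreover have "rotate (l+2) r \<noteq> []" using lr n by auto
    ultimately show "mono (bump_head (rotate (Suc l) (merge_at 0 r)))
                   = mono (merge_at (n-2-l) (bump_head (rotate (l+2) r)))"
      using rotate_merge_at_0[OF lr, of l] l by (simp add: bump_head_merge_at_Suc del: rotate_Suc)
  qed
  finally show ?thesis .
qed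

text \<open>The identity D(C w) = C(delta w), written out over the rotations of w: the front
  contractions agree termwise and the interior ones are matched by reindexing.\<close>
lemma merges_C_word:
  assumes n: "n = length w" "2 \<le> n"
  shows "(\<Sum>i<n. merges (bump_head (rotate i w))) = (\<Sum>p<n. C_word (merge_at 0 (rotate p w)))"
proof -
  define G where "G v q = mono (merge_at q (bump_head v))" for v q
  have front: "merges (bump_head (rotate i w))
             = mono (merge_at 0 (bump_head (rotate i w))) + (\<Sum>q<n-2. G (rotate i w) (Suc q))" for i
  proof -
    have "length (bump_head (rotate i w)) = Suc (Suc (n-2))"
      using n by (auto simp: bump_head_def)
    from merges_split_first[OF this] show ?thesis by (simp add: G_def)
  qed
  have contracted: "C_word (merge_at 0 (rotate p w)) = mono (merge_at 0 (bump_head (rotate p w))) +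
          (\<Sum>l<n-2. G (rotate (l+2) (rotate p w)) (n-2-l))" for p
    using C_word_merge_at_0[of "rotate p w" n] n by (simp add: G_def del: rotate_Suc)
  show ?thesis
    unfolding front contracted sum.distrib sum_rotations_reindex[OF n(1)] ..
qed

section \<open>The identity D(Sigma w) + C w = Sigma(delta w)\<close>

definition split_head :: "word \<Rightarrow> nat \<Rightarrow> word" where
  "split_head r j = (hd r + 1 - j) # tl r @ [j]"

definition Sigma_rot :: "word \<Rightarrow> elt" where
  "Sigma_rot r = (\<Sum>j\<in>{1..<hd r}. mono (split_head r j))"

lemma Sigma_word_eq: "Sigma_word w = (\<Sum>i<length w. Sigma_rot (rotate i w))"
  by (simp add: Sigma_word_def Let_def Sigma_rot_def split_head_def)

definition merges_front :: "word \<Rightarrow> elt" where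
  "merges_front r = (\<Sum>j\<in>{1..<hd r}. mono (merge_at 0 (split_head r j)))"

definition merges_back :: "word \<Rightarrow> elt" where
  "merges_back r = (\<Sum>j\<in>{1..<hd r}. mono (merge_at (length r - 1) (split_head r j)))"

lemma merges_Sigma_rot:
  assumes lr: "length r = n" and n: "2 \<le> n"
  shows "(\<Sum>j\<in>{1..<hd r}. merges (split_head r j))
       = merges_front r + (\<Sum>q<n-2. Sigma_rot (merge_at (Suc q) r)) + merges_back r"
proof -
  obtain c u where r: "r = c # u" using lr n by (cases r) auto
  obtain m where m: "n = Suc (Suc m)" using n by (metis add_2_eq_Suc le_Suc_ex)
  have D: "merges (split_head r j) = mono (merge_at 0 (split_head r j))
          + (\<Sum>q<n-2. mono (merge_at (Suc q) (split_head r j))) + mono (merge_at (n-1) (split_head r j))"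
    for j
  proof -
    have "length (split_head r j) = Suc (Suc (Suc m))"
      using lr m by (simp add: split_head_def r)
    then show ?thesis
      using merges_split_first[of "split_head r j" "Suc m"] m by (simp add: add.assoc)
  qed
  have interior: "(\<Sum>j\<in>{1..<hd r}. \<Sum>q<n-2. mono (merge_at (Suc q) (split_head r j)))
                = (\<Sum>q<n-2. Sigma_rot (merge_at (Suc q) r))"
  proof -
    have "(\<Sum>j\<in>{1..<hd r}. \<Sum>q<n-2. mono (merge_at (Suc q) (split_head r j)))
        = (\<Sum>q<n-2. \<Sum>j\<in>{1..<hd r}. mono (merge_at (Suc q) (split_head r j)))"
      by (rule sum.swap)
    also have "\<dots> = (\<Sum>q<n-2. Sigma_rot (merge_at (Suc q) r))"
      using lr by (intro sum.cong refl) (auto simp: Sigma_rot_def split_head_def r merge_at_snoc)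
    finally show ?thesis .
  qed
  show ?thesis
    unfolding D sum.distrib interior merges_front_def merges_back_def using lr by simp
qed

lemma Sigma_word_merge_at_0:
  assumes lr: "length r = n" and n: "2 \<le> n"
  shows "Sigma_word (merge_at 0 r)
       = Sigma_rot (merge_at 0 r) + (\<Sum>l<n-2. Sigma_rot (merge_at (n-2-l) (rotate (l+2) r)))"
proof -
  have lm: "length (merge_at 0 r) = Suc (n-2)"
    using lr n by (simp add: merge_at_def)
  have "Sigma_word (merge_at 0 r)
        = Sigma_rot (merge_at 0 r) + (\<Sum>l<n-2. Sigma_rot (rotate (Suc l) (merge_at 0 r)))"
    unfolding Sigma_word_eq lm sum_lessThan_Suc_first by simp
  also have "(\<Sum>l<n-2. Sigma_rot (rotate (Suc l) (merge_at 0 r)))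
           = (\<Sum>l<n-2. Sigma_rot (merge_at (n-2-l) (rotate (l+2) r)))"
    using rotate_merge_at_0[OF lr] by (intro sum.cong refl) (simp del: rotate_Suc)
  finally show ?thesis .
qed

lemma sum_atLeastLessThan_add_split:
  fixes f :: "nat \<Rightarrow> 'a::comm_monoid_add"
  assumes "1 \<le> a" "1 \<le> b"
  shows "(\<Sum>j\<in>{1..<a+b}. f j) = (\<Sum>j\<in>{1..<a}. f j) + f a + (\<Sum>j\<in>{1..<b}. f (a + j))"
proof -
  have "(\<Sum>j\<in>{1..<a+b}. f j) = (\<Sum>j\<in>{1..<a}. f j) + (\<Sum>j\<in>{a..<a+b}. f j)"
    using assms sum.atLeastLessThan_concat[of 1 a "a+b" f] by simp
  also have "(\<Sum>j\<in>{a..<a+b}. f j) = f a + (\<Sum>j\<in>{Suc a..<a+b}. f j)"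
    using assms by (simp add: sum.atLeast_Suc_lessThan)
  also have "(\<Sum>j\<in>{Suc a..<a+b}. f j) = (\<Sum>j\<in>{1..<b}. f (j + a))"
    using sum.shift_bounds_nat_ivl[of f 1 a b] by (simp add: add.commute)
  finally show ?thesis by (simp add: add_ac)
qed

text \<open>The front summand of Sigma for the contraction z_{a+b} u of z_a z_b u splits, according
  to j < a, j = a or j > a, into the front contractions for z_a z_b u, one summand of C, and
  the back contractions for the next rotation z_b u z_a.\<close>
lemma Sigma_rot_merge_at_0:
  assumes "1 \<le> a" "1 \<le> b"
  shows "Sigma_rot (merge_at 0 (a # b # u))
       = merges_front (a # b # u) + merges_back (b # u @ [a]) + mono (bump_head (b # u @ [a]))"
proof -
  let ?f = "\<lambda>j. mono ((a + b + 1 - j) # u @ [j])"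
  have "Sigma_rot (merge_at 0 (a # b # u)) = (\<Sum>j\<in>{1..<a+b}. ?f j)"
    by (simp add: Sigma_rot_def split_head_def)
  also have "\<dots> = (\<Sum>j\<in>{1..<a}. ?f j) + ?f a + (\<Sum>j\<in>{1..<b}. ?f (a + j))"
    by (rule sum_atLeastLessThan_add_split[OF assms])
  also have "(\<Sum>j\<in>{1..<a}. ?f j) = merges_front (a # b # u)"
    unfolding merges_front_def by (rule sum.cong) (auto simp: split_head_def)
  also have "(\<Sum>j\<in>{1..<b}. ?f (a + j)) = merges_back (b # u @ [a])"
    unfolding merges_back_def
    by (rule sum.cong) (auto simp: split_head_def merge_at_append[of u a, simplified])
  finally show ?thesis by (simp add: bump_head_def algebra_simps)
qed

text \<open>The identity D(Sigma w) + C w = Sigma(delta w), written out over the rotations of w: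
  front summands of Sigma(delta w) split by Sigma_rot_merge_at_0, the back contractions and the
  summands of C are shifted by one rotation, and interior terms are matched by reindexing.\<close>
lemma merges_Sigma_word:
  assumes n: "n = length w" "2 \<le> n" and pos: "\<forall>a\<in>set w. 1 \<le> a"
  shows "(\<Sum>i<n. \<Sum>j\<in>{1..<hd (rotate i w)}. merges (split_head (rotate i w) j))
         + (\<Sum>i<n. mono (bump_head (rotate i w)))
       = (\<Sum>p<n. Sigma_word (merge_at 0 (rotate p w)))"
proof -
  define G where "G v q = Sigma_rot (merge_at q v)" for v q
  have merges_rot: "(\<Sum>j\<in>{1..<hd (rotate i w)}. merges (split_head (rotate i w) j))
      = merges_front (rotate i w) + (\<Sum>q<n-2. G (rotate i w) (Suc q)) + merges_back (rotate i w)"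
    for i
    unfolding G_def by (rule merges_Sigma_rot) (use n in simp)+
  have contracted: "Sigma_word (merge_at 0 (rotate p w)) = Sigma_rot (merge_at 0 (rotate p w))
      + (\<Sum>l<n-2. G (rotate (l+2) (rotate p w)) (n-2-l))" for p
    unfolding G_def by (rule Sigma_word_merge_at_0) (use n in simp)+
  have Sigma_rot_contracted: "Sigma_rot (merge_at 0 (rotate p w)) = merges_front (rotate p w)
      + merges_back (rotate (1+p) w) + mono (bump_head (rotate (1+p) w))" for p
  proof -
    have "length (rotate p w) = n" using n by simp
    then obtain a b u where r: "rotate p w = a # b # u" using n
      by (cases "rotate p w"; cases "tl (rotate p w)") auto
    then have "a \<in> set w" "b \<in> set w" by (metis list.set_intros set_rotate)+
    then have "1 \<le> a" "1 \<le> b" using pos by auto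
    moreover have "rotate (1+p) w = b # u @ [a]"
      using r by simp
    ultimately show ?thesis unfolding r by (simp only: Sigma_rot_merge_at_0)
  qed
  have "(\<Sum>i<n. \<Sum>j\<in>{1..<hd (rotate i w)}. merges (split_head (rotate i w) j))
         + (\<Sum>i<n. mono (bump_head (rotate i w)))
      = (\<Sum>p<n. merges_front (rotate p w)) + (\<Sum>p<n. merges_back (rotate p w))
        + (\<Sum>p<n. mono (bump_head (rotate p w))) + (\<Sum>i<n. \<Sum>q<n-2. G (rotate i w) (Suc q))"
    unfolding merges_rot sum.distrib by (simp only: ac_simps)
  also have "\<dots> = (\<Sum>p<n. merges_front (rotate p w)) + (\<Sum>p<n. merges_back (rotate (1+p) w))
        + (\<Sum>p<n. mono (bump_head (rotate (1+p) w)))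
        + (\<Sum>p<n. \<Sum>l<n-2. G (rotate (l+2) (rotate p w)) (n-2-l))"
    unfolding n(1) sum_rotations_reindex[OF refl]
      sum_rotate_shift[where H = merges_back and c = 1]
      sum_rotate_shift[where H = "\<lambda>r. mono (bump_head r)" and c = 1] ..
  also have "\<dots> = (\<Sum>p<n. Sigma_word (merge_at 0 (rotate p w)))"
    unfolding contracted Sigma_rot_contracted sum.distrib ..
  finally show ?thesis .
qed

section \<open>The derivative of S^t(C(w)) and S^t(Sigma(w))\<close>

lemma ddt_St_mono: "ddt (St (mono v)) = St (merges v)"
  by (simp add: ddt_St_word)

text \<open>Words of length one: C(z_a) = z_{a+1} is killed by D, while Sigma(z_a) consists of
  the a - 1 words z_{a+1-j} z_j, each contracted to z_{a+1}.\<close>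
lemma ddt_St_Cop_letter: "ddt (St (Cop (mono [a]))) = 0"
proof -
  have "Cop (mono [a]) = mono [a + 1]"
    by (simp add: Cop_def C_word_eq bump_head_def)
  then show ?thesis by (simp only: ddt_St_mono) (simp add: merges_def)
qed

lemma ddt_St_Sigmaop_letter:
  assumes "1 \<le> a"
  shows "ddt (St (Sigmaop (mono [a]))) = Poly_Mapping.single [a + 1] (of_nat a - 1)"
proof -
  have "Sigmaop (mono [a]) = (\<Sum>j\<in>{1..<a}. mono [a + 1 - j, j])"
    by (simp add: Sigmaop_def Sigma_word_eq Sigma_rot_def split_head_def)
  then have "ddt (St (Sigmaop (mono [a]))) = (\<Sum>j\<in>{1..<a}. St (merges [a + 1 - j, j]))"
    by (simp only: St_sum ddt_sum ddt_St_mono)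
  also have "\<dots> = (\<Sum>j\<in>{1..<a}. mono [a + 1])"
    by (simp add: merges_def)
  also have "\<dots> = Poly_Mapping.single [a + 1] (of_nat a - 1)"
    using assms by (intro poly_mapping_eqI)
      (simp add: lookup_sum mono_def lookup_single when_def of_nat_diff)
  finally show ?thesis .
qed

lemma ddt_St_Cop:
  assumes "2 \<le> length w"
  shows "ddt (St (Cop (mono w))) = St (Cop (deltaop (mono w)))"
proof -
  have "ddt (St (Cop (mono w))) = St (\<Sum>i<length w. merges (bump_head (rotate i w)))"
    by (simp add: Cop_def C_word_eq St_sum ddt_sum ddt_St_word)
  also have "\<dots> = St (\<Sum>p<length w. C_word (merge_at 0 (rotate p w)))"
    unfolding merges_C_word[OF refl assms] ..
  also have "\<dots> = St (Cop (deltaop (mono w)))"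
    by (simp add: Cop_def deltaop_def delta_word_eq lin_sum)
  finally show ?thesis .
qed

lemma ddt_St_Sigmaop:
  assumes "2 \<le> length w" and "\<forall>a\<in>set w. 1 \<le> a"
  shows "ddt (St (Sigmaop (mono w))) = St (Sigmaop (deltaop (mono w))) - St (Cop (mono w))"
proof -
  have "ddt (St (Sigmaop (mono w)))
      = St (\<Sum>i<length w. \<Sum>j\<in>{1..<hd (rotate i w)}. merges (split_head (rotate i w) j))"
    by (simp add: Sigmaop_def Sigma_word_eq Sigma_rot_def St_sum ddt_sum ddt_St_word)
  also have "\<dots> = St (\<Sum>p<length w. Sigma_word (merge_at 0 (rotate p w)))
                   - St (\<Sum>i<length w. mono (bump_head (rotate i w)))"
    unfolding merges_Sigma_word[OF refl assms, symmetric] St_add by simp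
  also have "\<dots> = St (Sigmaop (deltaop (mono w))) - St (Cop (mono w))"
    by (simp add: Sigmaop_def Cop_def deltaop_def C_word_eq delta_word_eq lin_sum)
  finally show ?thesis .
qed

theorem lemma5p3:
  fixes w :: word
  assumes "w \<noteq> []" and "\<forall>a\<in>set w. 1 \<le> a"
  defines "k \<equiv> sum_list w"
  shows "(ddt (St (Cop (mono w))) =
           (if length w = 1 then 0 else St (Cop (deltaop (mono w))))) \<and>
         (ddt (St (Sigmaop (mono w))) =
           (if length w = 1 then Poly_Mapping.single [k + 1] (of_nat k - 1)
            else St (Sigmaop (deltaop (mono w))) - St (Cop (mono w))))"
proof (cases "length w = 1")
  case True
  then obtain a where "w = [a]" and "1 \<le> a" and "k = a"
    using assms by (cases w) (auto simp: length_Suc_conv k_def)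
  then show ?thesis
    using True ddt_St_Cop_letter ddt_St_Sigmaop_letter by simp
next
  case False
  then have "2 \<le> length w"
    using assms(1) by (cases w) (auto simp: Suc_le_eq)
  then show ?thesis
    using False ddt_St_Cop ddt_St_Sigmaop assms(2) by simp
qed

end
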